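(* Consider SEG: $X_{t+1/2}=X_t-\gamma F_t$, $X_{t+1}=X_t-\alpha\gamma F_{t+1/2}$, where $F_t=F(X_t)+U_t(X_t)$ and $F_{t+1/2}=F(X_{t+1/2})+U_{t+1/2}(X_{t+1/2})$. Let $F:\mathbb{R}^d\to\mathbb{R}^d$ be $L$-Lipschitz, let $x^*\in X^*=\{x:F(x)=0\}$ be such that $\langle F(x),x-x^*\rangle\ge\mu\|x-x^*\|^2-\lambda$ for all $x$ (with $\lambda\ge0,\mu>0$), and assume the stochastic oracle assumptions of the context. Let $Z_t=F_{t+1/2}$. If $0<\gamma\le\frac1{\sqrt3L}$, then $$\gamma^2\,\mathbb{E}[\|Z_t\|^2\mid\mathcal{F}_t]\le2\gamma\,\mathbb{E}[\langle Z_t,X_t-x^*\rangle\mid\mathcal{F}_t]+2(\lambda\gamma+3\sigma^2\gamma^2).$$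
   Context: Stochastic oracle: noise fields are i.i.d. random fields; filtration $(\mathcal{F}_t)$ (history of the iterates) with $\mathcal{F}_{t+1/2}=\mathcal{F}_t$; $U_t(X_t)$ is $\mathcal{F}_{t+1}$- but not $\mathcal{F}_t$-measurable; $\mathbb{E}[U_t(x)\mid\mathcal{F}_t]=0$ and $\mathbb{E}[\|U_t(x)\|^2\mid\mathcal{F}_t]\le\sigma^2$ for all $x$ (and likewise for $U_{t+1/2}$). *)

theory Defs
  imports "HOL-Probability.Probability"
begin

text \<open>Stochastic oracle assumption for a random field U (a map from outcomes to
vector fields) relative to a sub-sigma-algebra Fs of M: for every Fs-measurable
(random) query point W, the noise U(W) is square integrable, has zero conditional
mean given Fs (expressed componentwise, since conditional expectation in the
library is real-valued), and conditional second moment at most sigma^2.\<close>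

definition stoch_oracle ::
  "'w measure \<Rightarrow> 'w measure \<Rightarrow> ('w \<Rightarrow> 'a::euclidean_space \<Rightarrow> 'a) \<Rightarrow> real \<Rightarrow> bool" where
  "stoch_oracle M Fs U \<sigma> \<longleftrightarrow>
     (\<forall>W \<in> borel_measurable Fs.
        (\<lambda>\<omega>. U \<omega> (W \<omega>)) \<in> borel_measurable M \<and>
        integrable M (\<lambda>\<omega>. (norm (U \<omega> (W \<omega>)))\<^sup>2) \<and>
        (\<forall>b\<in>Basis. AE \<omega> in M. real_cond_exp M Fs (\<lambda>\<omega>. U \<omega> (W \<omega>) \<bullet> b) \<omega> = 0) \<and>
        (AE \<omega> in M. real_cond_exp M Fs (\<lambda>\<omega>. (norm (U \<omega> (W \<omega>)))\<^sup>2) \<omega> \<le> \<sigma>\<^sup>2))"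

end

theory Submission
  imports Defs
begin

text \<open>With \<open>g = F x + u\<close> the extrapolation direction, \<open>x' = x - \<gamma> g\<close> and
\<open>z = F x' + v\<close>, polarisation gives
\<open>2 \<langle>z, x - x\<^sup>*\<rangle> = 2 \<langle>z, x' - x\<^sup>*\<rangle> + \<gamma> (\<parallel>z\<parallel>\<^sup>2 + \<parallel>g\<parallel>\<^sup>2 - \<parallel>z - g\<parallel>\<^sup>2)\<close>.
Quasi-strong monotonicity bounds \<open>\<langle>F x', x' - x\<^sup>*\<rangle>\<close> below by \<open>-\<lambda>\<close>, and since
\<open>z - g = (F x' - F x) + v - u\<close> with \<open>\<parallel>F x' - F x\<parallel> \<le> L \<gamma> \<parallel>g\<parallel>\<close>, the step size condition
\<open>3 L\<^sup>2 \<gamma>\<^sup>2 \<le> 1\<close> lets \<open>\<parallel>g\<parallel>\<^sup>2\<close> absorb the Lipschitz part of \<open>\<gamma>\<^sup>2 \<parallel>z - g\<parallel>\<^sup>2\<close>.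
This leaves a pointwise bound whose only noise terms are \<open>\<langle>v, x' - x\<^sup>*\<rangle>\<close> and the squared
norms of \<open>u\<close> and \<open>v\<close>. Conditioning on \<open>\<F>\<^sub>t\<close> removes the former, because \<open>x'\<close> is
\<open>\<F>\<^sub>t\<^sub>+\<^sub>1\<^sub>/\<^sub>2\<close>-measurable and \<open>v\<close> is centred given \<open>\<F>\<^sub>t\<^sub>+\<^sub>1\<^sub>/\<^sub>2\<close>, and bounds the
latter by \<open>\<sigma>\<^sup>2\<close> each, by the tower property.\<close>

lemma power2_add3_le: "((a::real) + b + c)\<^sup>2 \<le> 3 * (a\<^sup>2 + b\<^sup>2 + c\<^sup>2)"
proof -
  have "0 \<le> (a - b)\<^sup>2 + (b - c)\<^sup>2 + (a - c)\<^sup>2" by simp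
  then show ?thesis by (simp add: power2_eq_square algebra_simps)
qed

lemma norm_add3_power2_le:
  fixes p q r :: "'a::real_normed_vector"
  shows "(norm (p + q + r))\<^sup>2 \<le> 3 * ((norm p)\<^sup>2 + (norm q)\<^sup>2 + (norm r)\<^sup>2)"
proof -
  have "norm (p + q + r) \<le> norm p + norm q + norm r"
    by (metis add_right_mono norm_triangle_ineq order_trans)
  then have "(norm (p + q + r))\<^sup>2 \<le> (norm p + norm q + norm r)\<^sup>2"
    by (simp add: power_mono)
  also have "\<dots> \<le> 3 * ((norm p)\<^sup>2 + (norm q)\<^sup>2 + (norm r)\<^sup>2)"
    by (rule power2_add3_le)
  finally show ?thesis .
qed

lemma inverse_sqrt3_step_size_bound:
  fixes L \<gamma> :: real
  assumes "0 < \<gamma>" and "\<gamma> \<le> 1 / (sqrt 3 * L)"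
  shows "3 * L\<^sup>2 * \<gamma>\<^sup>2 \<le> 1"
proof -
  have "0 < 1 / (sqrt 3 * L)"
    using assms by linarith
  then have "0 < L"
    by (simp add: zero_less_mult_iff)
  then have "\<gamma> * (sqrt 3 * L) \<le> 1"
    using assms by (simp add: field_simps)
  then have "(\<gamma> * (sqrt 3 * L))\<^sup>2 \<le> 1\<^sup>2"
    using assms \<open>0 < L\<close> by (intro power_mono) auto
  then show ?thesis by (simp add: algebra_simps)
qed

lemma extragradient_step_bound:
  fixes F :: "'a::real_inner \<Rightarrow> 'a" and x u v xs :: 'a and \<gamma> L lam :: real
  defines "xh \<equiv> x - \<gamma> *\<^sub>R (F x + u)"
  defines "z \<equiv> F xh + v"
  assumes lip: "L-lipschitz_on UNIV F" and step: "3 * L\<^sup>2 * \<gamma>\<^sup>2 \<le> 1" and "0 \<le> \<gamma>"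
    and mon: "- lam \<le> F xh \<bullet> (xh - xs)"
  shows "\<gamma>\<^sup>2 * (norm z)\<^sup>2 \<le> 2 * \<gamma> * (z \<bullet> (x - xs)) + 2 * \<gamma> * lam
           - 2 * \<gamma> * (v \<bullet> (xh - xs)) + 3 * \<gamma>\<^sup>2 * (norm u)\<^sup>2 + 3 * \<gamma>\<^sup>2 * (norm v)\<^sup>2"
proof -
  define g where "g = F x + u"
  have polar: "2 * (z \<bullet> g) = (norm z)\<^sup>2 + (norm g)\<^sup>2 - (norm (z - g))\<^sup>2"
    by (simp add: power2_norm_eq_inner inner_diff_left inner_diff_right inner_commute)
  have shift: "z \<bullet> (x - xs) = z \<bullet> (xh - xs) + \<gamma> * (z \<bullet> g)"
    by (simp add: xh_def g_def inner_diff_right)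
  have "norm (F xh - F x) \<le> L * norm (xh - x)"
    using lipschitz_onD[OF lip] by (simp add: dist_norm)
  also have "norm (xh - x) = \<gamma> * norm g"
    using \<open>0 \<le> \<gamma>\<close> by (simp add: xh_def g_def)
  finally have "(norm (F xh - F x))\<^sup>2 \<le> (L * (\<gamma> * norm g))\<^sup>2"
    by (simp add: power_mono)
  then have lip_sq: "(norm (F xh - F x))\<^sup>2 \<le> L\<^sup>2 * \<gamma>\<^sup>2 * (norm g)\<^sup>2"
    by (simp add: power_mult_distrib)
  have "z - g = (F xh - F x) + v + - u"
    by (simp add: z_def g_def algebra_simps)
  then have "(norm (z - g))\<^sup>2 \<le> 3 * ((norm (F xh - F x))\<^sup>2 + (norm v)\<^sup>2 + (norm u)\<^sup>2)"
    using norm_add3_power2_le[of "F xh - F x" v "- u"] by simp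
  also have "\<dots> \<le> (norm g)\<^sup>2 + 3 * (norm u)\<^sup>2 + 3 * (norm v)\<^sup>2"
    using lip_sq mult_right_mono[OF step, of "(norm g)\<^sup>2"] by (simp add: algebra_simps)
  finally have "\<gamma>\<^sup>2 * (norm (z - g))\<^sup>2 \<le> \<gamma>\<^sup>2 * ((norm g)\<^sup>2 + 3 * (norm u)\<^sup>2 + 3 * (norm v)\<^sup>2)"
    by (simp add: mult_left_mono)
  moreover have "2 * \<gamma> * (- lam) \<le> 2 * \<gamma> * (F xh \<bullet> (xh - xs))"
    using mult_left_mono[OF mon, of "2 * \<gamma>"] \<open>0 \<le> \<gamma>\<close> by simp
  moreover have "2 * \<gamma> * (z \<bullet> (x - xs))
      = 2 * \<gamma> * (F xh \<bullet> (xh - xs) + v \<bullet> (xh - xs))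
        + \<gamma>\<^sup>2 * ((norm z)\<^sup>2 + (norm g)\<^sup>2 - (norm (z - g))\<^sup>2)"
  proof -
    have "2 * \<gamma> * (z \<bullet> (x - xs)) = 2 * \<gamma> * (z \<bullet> (xh - xs)) + \<gamma>\<^sup>2 * (2 * (z \<bullet> g))"
      using shift by (simp add: power2_eq_square algebra_simps)
    moreover have "z \<bullet> (xh - xs) = F xh \<bullet> (xh - xs) + v \<bullet> (xh - xs)"
      by (simp add: z_def inner_add_left)
    ultimately show ?thesis
      by (simp only: polar)
  qed
  ultimately show ?thesis
    by (simp add: algebra_simps)
qed

definition square_integrable :: "'w measure \<Rightarrow> ('w \<Rightarrow> 'a::real_normed_vector) \<Rightarrow> bool" where
  "square_integrable M f \<longleftrightarrow> f \<in> borel_measurable M \<and> integrable M (\<lambda>\<omega>. (norm (f \<omega>))\<^sup>2)"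

lemma square_integrable_measurable: "square_integrable M f \<Longrightarrow> f \<in> borel_measurable M"
  by (simp add: square_integrable_def)

lemma square_integrable_integrable_norm: "square_integrable M f \<Longrightarrow> integrable M (\<lambda>\<omega>. (norm (f \<omega>))\<^sup>2)"
  by (simp add: square_integrable_def)

lemma square_integrable_norm_le_add:
  fixes g :: "'w \<Rightarrow> 'a::real_normed_vector" and f :: "'w \<Rightarrow> 'b::real_normed_vector"
    and h :: "'w \<Rightarrow> 'c::real_normed_vector"
  assumes g[measurable]: "g \<in> borel_measurable M"
    and "square_integrable M f" "square_integrable M h"
    and le: "\<And>\<omega>. norm (g \<omega>) \<le> norm (f \<omega>) + norm (h \<omega>)"
  shows "square_integrable M g"
proof -
  have int: "integrable M (\<lambda>\<omega>. 2 * (norm (f \<omega>))\<^sup>2 + 2 * (norm (h \<omega>))\<^sup>2)"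
    using assms(2,3) by (simp add: square_integrable_def)
  have bound: "norm ((norm (g \<omega>))\<^sup>2) \<le> norm (2 * (norm (f \<omega>))\<^sup>2 + 2 * (norm (h \<omega>))\<^sup>2)" for \<omega>
  proof -
    have "(norm (g \<omega>))\<^sup>2 \<le> (norm (f \<omega>) + norm (h \<omega>))\<^sup>2"
      using le by (simp add: power_mono)
    also have "\<dots> \<le> 2 * (norm (f \<omega>))\<^sup>2 + 2 * (norm (h \<omega>))\<^sup>2"
      using sum_squares_bound[of "norm (f \<omega>)" "norm (h \<omega>)"] by (simp add: power2_sum)
    finally show ?thesis by simp
  qed
  have "integrable M (\<lambda>\<omega>. (norm (g \<omega>))\<^sup>2)"
    by (rule Bochner_Integration.integrable_bound[OF int _ AE_I2[OF bound]]) measurable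
  with g show ?thesis
    by (simp add: square_integrable_def)
qed

lemma square_integrable_add:
  fixes f g :: "'w \<Rightarrow> 'a::{second_countable_topology, real_normed_vector}"
  assumes "square_integrable M f" "square_integrable M g"
  shows "square_integrable M (\<lambda>\<omega>. f \<omega> + g \<omega>)"
proof (rule square_integrable_norm_le_add[OF _ assms])
  show "(\<lambda>\<omega>. f \<omega> + g \<omega>) \<in> borel_measurable M"
    using assms by (intro borel_measurable_add square_integrable_measurable)
  show "norm (f \<omega> + g \<omega>) \<le> norm (f \<omega>) + norm (g \<omega>)" for \<omega>
    by (rule norm_triangle_ineq)
qed

lemma square_integrable_diff:
  fixes f g :: "'w \<Rightarrow> 'a::{second_countable_topology, real_normed_vector}"
  assumes "square_integrable M f" "square_integrable M g"
  shows "square_integrable M (\<lambda>\<omega>. f \<omega> - g \<omega>)"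
proof (rule square_integrable_norm_le_add[OF _ assms])
  show "(\<lambda>\<omega>. f \<omega> - g \<omega>) \<in> borel_measurable M"
    using assms by (intro borel_measurable_diff square_integrable_measurable)
  show "norm (f \<omega> - g \<omega>) \<le> norm (f \<omega>) + norm (g \<omega>)" for \<omega>
    by (rule norm_triangle_ineq4)
qed

lemma square_integrable_scaleR:
  assumes "square_integrable M f"
  shows "square_integrable M (\<lambda>\<omega>. c *\<^sub>R f \<omega>)"
proof -
  have [measurable]: "f \<in> borel_measurable M"
    using assms by (rule square_integrable_measurable)
  have "(\<lambda>\<omega>. c *\<^sub>R f \<omega>) \<in> borel_measurable M"
    by measurable
  with assms show ?thesis
    by (simp add: square_integrable_def power_mult_distrib)
qed

lemma (in finite_measure) square_integrable_const: "square_integrable M (\<lambda>_. c)"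
  by (simp add: square_integrable_def)

lemma (in finite_measure) square_integrable_lipschitz_comp:
  fixes F :: "'b::{second_countable_topology, real_normed_vector} \<Rightarrow> 'c::real_normed_vector"
  assumes lip: "L-lipschitz_on UNIV F" and "square_integrable M f"
  shows "square_integrable M (\<lambda>\<omega>. F (f \<omega>))"
proof (rule square_integrable_norm_le_add[where f = "\<lambda>_. F 0" and h = "\<lambda>\<omega>. L *\<^sub>R f \<omega>"])
  have "F \<in> borel_measurable borel"
    by (intro borel_measurable_continuous_onI lipschitz_on_continuous_on[OF lip])
  then show "(\<lambda>\<omega>. F (f \<omega>)) \<in> borel_measurable M"
    by (rule measurable_compose[OF square_integrable_measurable[OF assms(2)]])
  show "square_integrable M (\<lambda>\<omega>. L *\<^sub>R f \<omega>)"
    using assms(2) by (rule square_integrable_scaleR)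
  show "norm (F (f \<omega>)) \<le> norm (F 0) + norm (L *\<^sub>R f \<omega>)" for \<omega>
    using lipschitz_onD[OF lip, of "f \<omega>" 0] norm_triangle_sub[of "F (f \<omega>)" "F 0"]
      lipschitz_on_nonneg[OF lip] by (simp add: dist_norm)
qed (rule square_integrable_const)

lemma integrable_inner:
  fixes f g :: "'w \<Rightarrow> 'a::{second_countable_topology, real_inner}"
  assumes "square_integrable M f" "square_integrable M g"
  shows "integrable M (\<lambda>\<omega>. f \<omega> \<bullet> g \<omega>)"
proof -
  have int: "integrable M (\<lambda>\<omega>. (norm (f \<omega>))\<^sup>2 + (norm (g \<omega>))\<^sup>2)"
    using assms by (simp add: square_integrable_def)
  have [measurable]: "f \<in> borel_measurable M" "g \<in> borel_measurable M"
    using assms by (simp_all add: square_integrable_def)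
  have bound: "norm (a \<bullet> b) \<le> norm ((norm a)\<^sup>2 + (norm b)\<^sup>2)" for a b :: 'a
  proof -
    have "\<bar>a \<bullet> b\<bar> \<le> norm a * norm b"
      by (rule Cauchy_Schwarz_ineq2)
    also have "\<dots> \<le> (norm a)\<^sup>2 + (norm b)\<^sup>2"
      using sum_squares_bound[of "norm a" "norm b"] mult_nonneg_nonneg[OF norm_ge_zero norm_ge_zero, of a b]
      by (simp only: mult.assoc)
    finally show ?thesis by simp
  qed
  show ?thesis
    by (rule Bochner_Integration.integrable_bound[OF int _ AE_I2[OF bound]]) measurable
qed

lemma square_integrable_inner_const:
  fixes f :: "'w \<Rightarrow> 'a::{second_countable_topology, real_inner}"
  assumes "square_integrable M f"
  shows "square_integrable M (\<lambda>\<omega>. f \<omega> \<bullet> c)"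
proof (rule square_integrable_norm_le_add[where f = "\<lambda>\<omega>. norm c *\<^sub>R f \<omega>" and h = "\<lambda>\<omega>. norm c *\<^sub>R f \<omega>"])
  show "(\<lambda>\<omega>. f \<omega> \<bullet> c) \<in> borel_measurable M"
    by (intro borel_measurable_inner square_integrable_measurable[OF assms] borel_measurable_const)
  show "square_integrable M (\<lambda>\<omega>. norm c *\<^sub>R f \<omega>)"
    using assms by (rule square_integrable_scaleR)
  show "norm (f \<omega> \<bullet> c) \<le> norm (norm c *\<^sub>R f \<omega>) + norm (norm c *\<^sub>R f \<omega>)" for \<omega>
    using Cauchy_Schwarz_ineq2[of "f \<omega>" c] by (simp add: mult.commute)
qed (rule square_integrable_scaleR[OF assms])

lemma stoch_oracleD:
  assumes "stoch_oracle M F U \<sigma>" and "W \<in> borel_measurable F"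
  shows "square_integrable M (\<lambda>\<omega>. U \<omega> (W \<omega>))"
    and "\<And>b. b \<in> Basis \<Longrightarrow> AE \<omega> in M. real_cond_exp M F (\<lambda>\<omega>. U \<omega> (W \<omega>) \<bullet> b) \<omega> = 0"
    and "AE \<omega> in M. real_cond_exp M F (\<lambda>\<omega>. (norm (U \<omega> (W \<omega>)))\<^sup>2) \<omega> \<le> \<sigma>\<^sup>2"
proof -
  note facts = bspec[OF assms(1)[unfolded stoch_oracle_def] assms(2)]
  show "square_integrable M (\<lambda>\<omega>. U \<omega> (W \<omega>))"
    using facts unfolding square_integrable_def by (intro conjI) (elim conjE, assumption)+
  show "AE \<omega> in M. real_cond_exp M F (\<lambda>\<omega>. U \<omega> (W \<omega>) \<bullet> b) \<omega> = 0" if "b \<in> Basis" for b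
    using facts that by (elim conjE) (erule bspec)
  show "AE \<omega> in M. real_cond_exp M F (\<lambda>\<omega>. (norm (U \<omega> (W \<omega>)))\<^sup>2) \<omega> \<le> \<sigma>\<^sup>2"
    using facts by (elim conjE)
qed

lemma sigma_finite_subalgebra_of_prob_space:
  assumes "prob_space M" and "subalgebra M F"
  shows "sigma_finite_subalgebra M F"
proof -
  interpret prob_space M by fact
  have "finite_measure_subalgebra M F"
    unfolding finite_measure_subalgebra_def finite_measure_subalgebra_axioms_def
    using finite_measure_axioms assms(2) by simp
  then show ?thesis
    by (rule finite_measure_subalgebra_is_sigma_finite)
qed

context sigma_finite_subalgebra
begin

lemma real_cond_exp_nested_le:
  assumes "subalgebra M G" "subalgebra G F" "integrable M f"
    and "AE \<omega> in M. real_cond_exp M G f \<omega> \<le> c"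
  shows "AE \<omega> in M. real_cond_exp M F f \<omega> \<le> c"
proof -
  interpret G: sigma_finite_subalgebra M G
    by (rule nested_subalg_is_sigma_finite[OF assms(1,2)])
  have "AE \<omega> in M. real_cond_exp M F (real_cond_exp M G f) \<omega> \<le> c"
    by (rule real_cond_exp_le_c[OF G.real_cond_exp_int(1)[OF assms(3)] assms(4)])
  with real_cond_exp_nested_subalg[OF assms(1-3)] show ?thesis
    by eventually_elim simp
qed

lemma real_cond_exp_nested_eq:
  assumes "subalgebra M G" "subalgebra G F" "integrable M f"
    and "AE \<omega> in M. real_cond_exp M G f \<omega> = c"
  shows "AE \<omega> in M. real_cond_exp M F f \<omega> = c"
proof -
  interpret G: sigma_finite_subalgebra M G
    by (rule nested_subalg_is_sigma_finite[OF assms(1,2)])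
  have "AE \<omega> in M. real_cond_exp M F (real_cond_exp M G f) \<omega> \<le> c"
    using assms(4) by (intro real_cond_exp_le_c[OF G.real_cond_exp_int(1)[OF assms(3)]]) auto
  moreover have "AE \<omega> in M. real_cond_exp M F (real_cond_exp M G f) \<omega> \<ge> c"
    using assms(4) by (intro real_cond_exp_ge_c[OF G.real_cond_exp_int(1)[OF assms(3)]]) auto
  ultimately show ?thesis
    using real_cond_exp_nested_subalg[OF assms(1-3)] by eventually_elim simp
qed

lemma real_cond_exp_inner_eq_0:
  fixes V Y :: "'a \<Rightarrow> 'b::euclidean_space"
  assumes Y: "Y \<in> borel_measurable F" "square_integrable M Y" and V: "square_integrable M V"
    and centred: "\<And>b. b \<in> Basis \<Longrightarrow> AE \<omega> in M. real_cond_exp M F (\<lambda>\<omega>. V \<omega> \<bullet> b) \<omega> = 0"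
  shows "AE \<omega> in M. real_cond_exp M F (\<lambda>\<omega>. V \<omega> \<bullet> Y \<omega>) \<omega> = 0"
proof -
  have [measurable]: "V \<in> borel_measurable M"
    using V by (rule square_integrable_measurable)
  have prod: "integrable M (\<lambda>\<omega>. (Y \<omega> \<bullet> b) * (V \<omega> \<bullet> b))" for b
    using integrable_inner[OF square_integrable_inner_const[OF Y(2)] square_integrable_inner_const[OF V]]
    by simp
  have expand: "(\<lambda>\<omega>. V \<omega> \<bullet> Y \<omega>) = (\<lambda>\<omega>. \<Sum>b\<in>Basis. (Y \<omega> \<bullet> b) * (V \<omega> \<bullet> b))"
    by (rule ext, subst euclidean_inner) (simp add: mult.commute)
  have "AE \<omega> in M. real_cond_exp M F (\<lambda>\<omega>. \<Sum>b\<in>Basis. (Y \<omega> \<bullet> b) * (V \<omega> \<bullet> b)) \<omega>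
      = (\<Sum>b\<in>Basis. real_cond_exp M F (\<lambda>\<omega>. (Y \<omega> \<bullet> b) * (V \<omega> \<bullet> b)) \<omega>)"
    by (rule real_cond_exp_sum[OF prod])
  moreover have "AE \<omega> in M. \<forall>b\<in>Basis. real_cond_exp M F (\<lambda>\<omega>. (Y \<omega> \<bullet> b) * (V \<omega> \<bullet> b)) \<omega> = 0"
  proof (rule AE_finite_allI[OF finite_Basis])
    fix b :: 'b assume "b \<in> Basis"
    have [measurable]: "(\<lambda>\<omega>. Y \<omega> \<bullet> b) \<in> borel_measurable F"
      using Y(1) by measurable
    have "AE \<omega> in M. real_cond_exp M F (\<lambda>\<omega>. (Y \<omega> \<bullet> b) * (V \<omega> \<bullet> b)) \<omega>
        = (Y \<omega> \<bullet> b) * real_cond_exp M F (\<lambda>\<omega>. V \<omega> \<bullet> b) \<omega>"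
      by (rule real_cond_exp_mult[OF _ _ prod]) measurable
    with centred[OF \<open>b \<in> Basis\<close>]
    show "AE \<omega> in M. real_cond_exp M F (\<lambda>\<omega>. (Y \<omega> \<bullet> b) * (V \<omega> \<bullet> b)) \<omega> = 0"
      by eventually_elim simp
  qed
  ultimately show ?thesis
    unfolding expand by eventually_elim simp
qed

lemma stoch_oracle_coarse_cond_exp:
  assumes "subalgebra M G" "subalgebra G F" and U_oracle: "stoch_oracle M G U \<sigma>"
    and W: "W \<in> borel_measurable G" and Y: "Y \<in> borel_measurable G" "square_integrable M Y"
  shows "AE \<omega> in M. real_cond_exp M F (\<lambda>\<omega>. U \<omega> (W \<omega>) \<bullet> Y \<omega>) \<omega> = 0"
    and "AE \<omega> in M. real_cond_exp M F (\<lambda>\<omega>. (norm (U \<omega> (W \<omega>)))\<^sup>2) \<omega> \<le> \<sigma>\<^sup>2"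
proof -
  interpret G: sigma_finite_subalgebra M G
    by (rule nested_subalg_is_sigma_finite[OF assms(1,2)])
  note noise = stoch_oracleD[OF U_oracle W]
  show "AE \<omega> in M. real_cond_exp M F (\<lambda>\<omega>. U \<omega> (W \<omega>) \<bullet> Y \<omega>) \<omega> = 0"
    using assms(1,2) integrable_inner[OF noise(1) Y(2)] G.real_cond_exp_inner_eq_0[OF Y noise(1,2)]
    by (rule real_cond_exp_nested_eq)
  show "AE \<omega> in M. real_cond_exp M F (\<lambda>\<omega>. (norm (U \<omega> (W \<omega>)))\<^sup>2) \<omega> \<le> \<sigma>\<^sup>2"
    using assms(1,2) square_integrable_integrable_norm[OF noise(1)] noise(3)
    by (rule real_cond_exp_nested_le)
qed

lemma real_cond_exp_extragradient_bound:
  fixes s b n p q :: "'a \<Rightarrow> real"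
  assumes pointwise: "\<And>\<omega>. \<gamma>\<^sup>2 * s \<omega> \<le> 2 * \<gamma> * b \<omega> + 2 * \<gamma> * lam - 2 * \<gamma> * n \<omega>
      + 3 * \<gamma>\<^sup>2 * p \<omega> + 3 * \<gamma>\<^sup>2 * q \<omega>"
    and int: "integrable M s" "integrable M b" "integrable M n" "integrable M p" "integrable M q"
    and n: "AE \<omega> in M. real_cond_exp M F n \<omega> = 0"
    and p: "AE \<omega> in M. real_cond_exp M F p \<omega> \<le> \<sigma>\<^sup>2"
    and q: "AE \<omega> in M. real_cond_exp M F q \<omega> \<le> \<sigma>\<^sup>2"
  shows "AE \<omega> in M. \<gamma>\<^sup>2 * real_cond_exp M F s \<omega>
           \<le> 2 * \<gamma> * real_cond_exp M F b \<omega> + 2 * (lam * \<gamma> + 3 * \<sigma>\<^sup>2 * \<gamma>\<^sup>2)"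
proof -
  let ?E = "real_cond_exp M F"
  define d1 where "d1 = (\<lambda>\<omega>. \<gamma>\<^sup>2 * s \<omega> - 2 * \<gamma> * b \<omega>)"
  define d2 where "d2 = (\<lambda>\<omega>. d1 \<omega> + 2 * \<gamma> * n \<omega>)"
  define d3 where "d3 = (\<lambda>\<omega>. d2 \<omega> - 3 * \<gamma>\<^sup>2 * p \<omega>)"
  define d where "d = (\<lambda>\<omega>. d3 \<omega> - 3 * \<gamma>\<^sup>2 * q \<omega>)"
  have d1: "integrable M d1" and d2: "integrable M d2" and d3: "integrable M d3"
    and d: "integrable M d"
    using int by (simp_all add: d1_def d2_def d3_def d_def)
  have cmult: "integrable M (\<lambda>\<omega>. c * f \<omega>)" if "integrable M f" for c and f :: "'a \<Rightarrow> real"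
    using that by simp
  have "d \<omega> \<le> 2 * \<gamma> * lam" for \<omega>
    using pointwise[of \<omega>] by (simp add: d1_def d2_def d3_def d_def)
  then have "AE \<omega> in M. ?E d \<omega> \<le> 2 * \<gamma> * lam"
    by (intro real_cond_exp_le_c[OF d] AE_I2)
  moreover have "AE \<omega> in M. ?E d1 \<omega> = \<gamma>\<^sup>2 * ?E s \<omega> - 2 * \<gamma> * ?E b \<omega>"
    using real_cond_exp_diff[OF cmult[OF int(1), of "\<gamma>\<^sup>2"] cmult[OF int(2), of "2 * \<gamma>"]]
      real_cond_exp_cmult[OF int(1), of "\<gamma>\<^sup>2"] real_cond_exp_cmult[OF int(2), of "2 * \<gamma>"]
    unfolding d1_def by eventually_elim simp
  moreover have "AE \<omega> in M. ?E d2 \<omega> = ?E d1 \<omega> + 2 * \<gamma> * ?E n \<omega>"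
    using real_cond_exp_add[OF d1 cmult[OF int(3), of "2 * \<gamma>"]] real_cond_exp_cmult[OF int(3), of "2 * \<gamma>"]
    unfolding d2_def by eventually_elim simp
  moreover have "AE \<omega> in M. ?E d3 \<omega> = ?E d2 \<omega> - 3 * \<gamma>\<^sup>2 * ?E p \<omega>"
    using real_cond_exp_diff[OF d2 cmult[OF int(4), of "3 * \<gamma>\<^sup>2"]] real_cond_exp_cmult[OF int(4), of "3 * \<gamma>\<^sup>2"]
    unfolding d3_def by eventually_elim simp
  moreover have "AE \<omega> in M. ?E d \<omega> = ?E d3 \<omega> - 3 * \<gamma>\<^sup>2 * ?E q \<omega>"
    using real_cond_exp_diff[OF d3 cmult[OF int(5), of "3 * \<gamma>\<^sup>2"]] real_cond_exp_cmult[OF int(5), of "3 * \<gamma>\<^sup>2"]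
    unfolding d_def by eventually_elim simp
  ultimately show ?thesis
    using n p q
  proof eventually_elim
    case (elim \<omega>)
    have "3 * \<gamma>\<^sup>2 * ?E p \<omega> \<le> 3 * \<gamma>\<^sup>2 * \<sigma>\<^sup>2" "3 * \<gamma>\<^sup>2 * ?E q \<omega> \<le> 3 * \<gamma>\<^sup>2 * \<sigma>\<^sup>2"
      using elim(7,8) by (simp_all add: mult_left_mono)
    with elim(1-6) show ?case
      by (simp add: algebra_simps)
  qed
qed

end

theorem propositionB1:
  fixes M Ft Gt :: "'w measure"
    and F :: "'a::euclidean_space \<Rightarrow> 'a"
    and X :: "'w \<Rightarrow> 'a"
    and U Uh :: "'w \<Rightarrow> 'a \<Rightarrow> 'a"
    and L \<mu> lam \<sigma> \<gamma> :: real
    and xs :: 'a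
  assumes "prob_space M"
    and "subalgebra M Ft" and "subalgebra M Gt" and "subalgebra Gt Ft"
    and "L-lipschitz_on UNIV F"
    and "F xs = 0"
    and "lam \<ge> 0" and "\<mu> > 0"
    and "\<forall>x. F x \<bullet> (x - xs) \<ge> \<mu> * (norm (x - xs))\<^sup>2 - lam"
    and "X \<in> borel_measurable Ft"
    and "integrable M (\<lambda>\<omega>. (norm (X \<omega>))\<^sup>2)"
    and "stoch_oracle M Ft U \<sigma>"
    and "stoch_oracle M Gt Uh \<sigma>"
    and "(\<lambda>\<omega>. X \<omega> - \<gamma> *\<^sub>R (F (X \<omega>) + U \<omega> (X \<omega>))) \<in> borel_measurable Gt"
    and "0 < \<gamma>" and "\<gamma> \<le> 1 / (sqrt 3 * L)"
  shows "let Xh = (\<lambda>\<omega>. X \<omega> - \<gamma> *\<^sub>R (F (X \<omega>) + U \<omega> (X \<omega>)));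
             Z = (\<lambda>\<omega>. F (Xh \<omega>) + Uh \<omega> (Xh \<omega>))
         in AE \<omega> in M.
              \<gamma>\<^sup>2 * real_cond_exp M Ft (\<lambda>\<omega>. (norm (Z \<omega>))\<^sup>2) \<omega>
              \<le> 2 * \<gamma> * real_cond_exp M Ft (\<lambda>\<omega>. Z \<omega> \<bullet> (X \<omega> - xs)) \<omega>
                + 2 * (lam * \<gamma> + 3 * \<sigma>\<^sup>2 * \<gamma>\<^sup>2)"
proof -
  interpret prob_space M by fact
  interpret Ft: sigma_finite_subalgebra M Ft
    using assms(1,2) by (rule sigma_finite_subalgebra_of_prob_space)
  define Xh where "Xh = (\<lambda>\<omega>. X \<omega> - \<gamma> *\<^sub>R (F (X \<omega>) + U \<omega> (X \<omega>)))"
  define Z where "Z = (\<lambda>\<omega>. F (Xh \<omega>) + Uh \<omega> (Xh \<omega>))"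
  have Xh_Gt: "Xh \<in> borel_measurable Gt"
    using assms(14) by (simp add: Xh_def)
  note U = stoch_oracleD[OF assms(12,10)] and Uh = stoch_oracleD[OF assms(13) Xh_Gt]
  have X_sq: "square_integrable M X"
    using measurable_from_subalg[OF assms(2,10)] assms(11) by (simp add: square_integrable_def)
  have Xh_sq: "square_integrable M Xh"
    unfolding Xh_def using X_sq U(1)
    by (intro square_integrable_diff square_integrable_scaleR square_integrable_add
        square_integrable_lipschitz_comp[OF assms(5)])
  have Z_sq: "square_integrable M Z"
    unfolding Z_def using Xh_sq Uh(1)
    by (intro square_integrable_add square_integrable_lipschitz_comp[OF assms(5)])
  have centred_diff: "square_integrable M (\<lambda>\<omega>. Y \<omega> - xs)" if "square_integrable M Y" for Y
    using that square_integrable_const by (rule square_integrable_diff)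
  have monotone: "- lam \<le> F x \<bullet> (x - xs)" for x
    using assms(8) assms(9)[rule_format, of x] by (smt (verit) mult_nonneg_nonneg zero_le_power2)
  have pointwise: "\<gamma>\<^sup>2 * (norm (Z \<omega>))\<^sup>2 \<le> 2 * \<gamma> * (Z \<omega> \<bullet> (X \<omega> - xs)) + 2 * \<gamma> * lam
      - 2 * \<gamma> * (Uh \<omega> (Xh \<omega>) \<bullet> (Xh \<omega> - xs))
      + 3 * \<gamma>\<^sup>2 * (norm (U \<omega> (X \<omega>)))\<^sup>2 + 3 * \<gamma>\<^sup>2 * (norm (Uh \<omega> (Xh \<omega>)))\<^sup>2" for \<omega>
    using extragradient_step_bound[OF assms(5) inverse_sqrt3_step_size_bound[OF assms(15,16)]
        less_imp_le[OF assms(15)] monotone]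
    unfolding Z_def Xh_def .
  have "(\<lambda>\<omega>. Xh \<omega> - xs) \<in> borel_measurable Gt"
    using Xh_Gt by measurable
  note noise = Ft.stoch_oracle_coarse_cond_exp[OF assms(3,4,13) Xh_Gt this centred_diff[OF Xh_sq]]
  show ?thesis
    using Ft.real_cond_exp_extragradient_bound[OF pointwise
        square_integrable_integrable_norm[OF Z_sq] integrable_inner[OF Z_sq centred_diff[OF X_sq]]
        integrable_inner[OF Uh(1) centred_diff[OF Xh_sq]] square_integrable_integrable_norm[OF U(1)]
        square_integrable_integrable_norm[OF Uh(1)] noise(1) U(3) noise(2)]
    by (simp add: Xh_def Z_def Let_def)
qed

end
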